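(* Let $(\mu_0^3,\cdot,[-,-])$ be a transposed Poisson algebra structure on the associative algebra $\mu_0^3$. Then it is isomorphic to one of the following pairwise non-isomorphic algebras: $\mathbf{TP}(1,0)$, or $\mathbf{TP}(0,\alpha)$ with $\alpha\in\mathbb{C}$.
   Context: $\mu_0^3$ is the complex commutative associative algebra with basis $\{e_1,e_2,e_3\}$ and $e_1\cdot e_1=e_2$, $e_1\cdot e_2=e_2\cdot e_1=e_3$, other products zero. A transposed Poisson algebra is a triple $(\mathfrak{L},\cdot,[-,-])$ with $(\mathfrak{L},\cdot)$ commutative associative, $(\mathfrak{L},[-,-])$ a Lie algebra, and $2z\cdot[x,y]=[z\cdot x,y]+[x,z\cdot y]$ for all $x,y,z$. For $\alpha_2,\alpha_3\in\mathbb{C}$, $\mathbf{TP}(\alpha_2,\alpha_3)$ denotes $\mu_0^3$ with the bracket $[e_i,e_j]=(j-i)\sum_{t=i+j-1}^{3}\alpha_{t-i-j+3}e_t$ for $3\leq i+j\leq 4$, all other brackets of basis elements zero. Isomorphisms preserve both operations. *)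

theory Defs
  imports "HOL-Analysis.Analysis"
begin

text \<open>The underlying vector space of mu_0^3 is complex^3.  Basis vectors e_1, e_2, e_3
  are indexed by naturals 1,2,3 (mapped to the three distinct elements of the type 3).\<close>

type_synonym V3 = "complex ^ 3"

definition crd :: "V3 \<Rightarrow> nat \<Rightarrow> complex" where
  "crd x i = x $ (of_nat i :: 3)"

definition ebas :: "nat \<Rightarrow> V3" where
  "ebas i = (\<chi> k. if k = (of_nat i :: 3) then 1 else 0)"

definition mu0_tab :: "nat \<Rightarrow> nat \<Rightarrow> V3" where
  "mu0_tab i j = (if i = 1 \<and> j = 1 then ebas 2
                  else if (i = 1 \<and> j = 2) \<or> (i = 2 \<and> j = 1) then ebas 3 else 0)"

definition mu0 :: "V3 \<Rightarrow> V3 \<Rightarrow> V3" where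
  "mu0 x y = (\<Sum>i\<in>{1..3}. \<Sum>j\<in>{1..3}. (crd x i * crd y j) *s mu0_tab i j)"

definition tp_alpha :: "complex \<Rightarrow> complex \<Rightarrow> nat \<Rightarrow> complex" where
  "tp_alpha a2 a3 k = (if k = 2 then a2 else if k = 3 then a3 else 0)"

definition tp_tab :: "complex \<Rightarrow> complex \<Rightarrow> nat \<Rightarrow> nat \<Rightarrow> V3" where
  "tp_tab a2 a3 i j = (if 3 \<le> i + j \<and> i + j \<le> 4
      then of_int (int j - int i) *s (\<Sum>t\<in>{i+j-1..3}. tp_alpha a2 a3 (t + 3 - (i + j)) *s ebas t)
      else 0)"

definition TP :: "complex \<Rightarrow> complex \<Rightarrow> V3 \<Rightarrow> V3 \<Rightarrow> V3" where
  "TP a2 a3 x y = (\<Sum>i\<in>{1..3}. \<Sum>j\<in>{1..3}. (crd x i * crd y j) *s tp_tab a2 a3 i j)"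

definition clinear3 :: "(V3 \<Rightarrow> V3) \<Rightarrow> bool" where
  "clinear3 f \<longleftrightarrow> (\<forall>x y. f (x + y) = f x + f y) \<and> (\<forall>c x. f (c *s x) = c *s f x)"

definition cbilinear3 :: "(V3 \<Rightarrow> V3 \<Rightarrow> V3) \<Rightarrow> bool" where
  "cbilinear3 b \<longleftrightarrow> (\<forall>y. clinear3 (\<lambda>x. b x y)) \<and> (\<forall>x. clinear3 (\<lambda>y. b x y))"

definition is_lie :: "(V3 \<Rightarrow> V3 \<Rightarrow> V3) \<Rightarrow> bool" where
  "is_lie br \<longleftrightarrow> cbilinear3 br \<and> (\<forall>x. br x x = 0) \<and>
     (\<forall>x y z. br x (br y z) + br y (br z x) + br z (br x y) = 0)"

definition is_TP_on_mu0 :: "(V3 \<Rightarrow> V3 \<Rightarrow> V3) \<Rightarrow> bool" where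
  "is_TP_on_mu0 br \<longleftrightarrow> is_lie br \<and>
     (\<forall>x y z. 2 *s mu0 z (br x y) = br (mu0 z x) y + br x (mu0 z y))"

definition TP_iso :: "(V3 \<Rightarrow> V3 \<Rightarrow> V3) \<Rightarrow> (V3 \<Rightarrow> V3 \<Rightarrow> V3) \<Rightarrow> bool" where
  "TP_iso br1 br2 \<longleftrightarrow> (\<exists>\<phi>. clinear3 \<phi> \<and> bij \<phi> \<and>
      (\<forall>x y. \<phi> (mu0 x y) = mu0 (\<phi> x) (\<phi> y)) \<and>
      (\<forall>x y. \<phi> (br1 x y) = br2 (\<phi> x) (\<phi> y)))"

end

theory Submission
  imports Defs
begin

text \<open>The transposed Poisson identity with z = e1 and z = e2 expresses [e1,e3] and [e2,e3]
  through [e1,e2]: one gets [e1,e3] = 2 e1[e1,e2] and [e2,e3] = 0, while [e1,e2] has no e1-part.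
  Hence every bracket is TP(a,b), where (0,a,b) = [e1,e2].  An automorphism of mu_0^3 is fixed by
  the image u = (c,d,_) of e1, with c \<noteq> 0, and sends e2, e3 to u^2, u^3; if it carries
  TP(a,b) to TP(a',b'), comparing the images of [e1,e2] gives a = c a' and, when a = 0, b = b'.  For a \<noteq> 0 the automorphism with
  u = (a, ab/2, 0) carries TP(a,b) to TP(1,0).\<close>

declare One_nat_def [simp del]

lemma vec3_eq_iff: "(x::V3) = y \<longleftrightarrow> x$1 = y$1 \<and> x$2 = y$2 \<and> x$3 = y$3"
  by (simp add: vec_eq_iff forall_3)

lemma crd_eq_nth [simp]: "crd x 1 = x$1" "crd x 2 = x$2" "crd x 3 = x$3"
  by (simp_all add: crd_def)

lemma ebas_nth [simp]:
  "ebas 1 $ 1 = 1" "ebas 1 $ 2 = 0" "ebas 1 $ 3 = 0"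
  "ebas 2 $ 1 = 0" "ebas 2 $ 2 = 1" "ebas 2 $ 3 = 0"
  "ebas 3 $ 1 = 0" "ebas 3 $ 2 = 0" "ebas 3 $ 3 = 1"
  by (simp_all add: ebas_def)

lemma atLeastAtMost_1_3: "{1..3::nat} = {1,2,3}"
  by auto

lemma mu0_nth [simp]:
  "mu0 x y $ 1 = 0" "mu0 x y $ 2 = x$1 * y$1" "mu0 x y $ 3 = x$1 * y$2 + x$2 * y$1"
  unfolding mu0_def atLeastAtMost_1_3 by (simp_all add: mu0_tab_def crd_def)

lemma TP_nth [simp]:
  "TP a b x y $ 1 = 0"
  "TP a b x y $ 2 = a * (x$1 * y$2 - x$2 * y$1)"
  "TP a b x y $ 3 = b * (x$1 * y$2 - x$2 * y$1) + 2 * a * (x$1 * y$3 - x$3 * y$1)"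
proof -
  have "{Suc (Suc 0)..3::nat} = {2,3}" "{2..3::nat} = {2,3}" "{Suc (Suc (Suc 0))..3::nat} = {3}"
    by auto
  then show "TP a b x y $ 1 = 0"
    "TP a b x y $ 2 = a * (x$1 * y$2 - x$2 * y$1)"
    "TP a b x y $ 3 = b * (x$1 * y$2 - x$2 * y$1) + 2 * a * (x$1 * y$3 - x$3 * y$1)"
    unfolding TP_def atLeastAtMost_1_3
    by (simp_all add: tp_tab_def tp_alpha_def crd_def algebra_simps)
qed

lemma mu0_ebas:
  "mu0 (ebas 1) (ebas 1) = ebas 2" "mu0 (ebas 1) (ebas 2) = ebas 3" "mu0 (ebas 2) (ebas 1) = ebas 3"
  "mu0 (ebas 1) (ebas 3) = 0" "mu0 (ebas 2) (ebas 2) = 0"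
  by (simp_all add: vec3_eq_iff)

lemma clinear3D:
  assumes "clinear3 f"
  shows "f (x + y) = f x + f y" "f (c *s x) = c *s f x" "f 0 = 0"
  using assms unfolding clinear3_def by (metis vector_smult_lzero)+

lemma cbilinear3D:
  assumes "cbilinear3 b"
  shows "b (u + v) w = b u w + b v w" "b (c *s u) w = c *s b u w"
    "b w (u + v) = b w u + b w v" "b w (c *s u) = c *s b w u" "b w 0 = 0"
  using assms clinear3D unfolding cbilinear3_def by blast+

lemma vec3_basis_decomp: "x$1 *s ebas 1 + x$2 *s ebas 2 + x$3 *s ebas 3 = x"
  by (simp add: vec3_eq_iff)

lemma cbilinear3_expand:
  assumes "cbilinear3 b"
  shows "b x y =
      (x$1*y$1) *s b (ebas 1) (ebas 1) + (x$1*y$2) *s b (ebas 1) (ebas 2) + (x$1*y$3) *s b (ebas 1) (ebas 3)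
    + (x$2*y$1) *s b (ebas 2) (ebas 1) + (x$2*y$2) *s b (ebas 2) (ebas 2) + (x$2*y$3) *s b (ebas 2) (ebas 3)
    + (x$3*y$1) *s b (ebas 3) (ebas 1) + (x$3*y$2) *s b (ebas 3) (ebas 2) + (x$3*y$3) *s b (ebas 3) (ebas 3)"
proof -
  have "b x y = b (x$1 *s ebas 1 + x$2 *s ebas 2 + x$3 *s ebas 3)
                  (y$1 *s ebas 1 + y$2 *s ebas 2 + y$3 *s ebas 3)"
    by (simp only: vec3_basis_decomp)
  then show ?thesis
    by (simp add: cbilinear3D[OF assms] vector_smult_assoc algebra_simps)
qed

lemma is_lie_anticomm:
  assumes "is_lie br"
  shows "br u v = - br v u"
proof -
  have bil: "cbilinear3 br" and alt: "\<And>x. br x x = 0"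
    using assms unfolding is_lie_def by auto
  have "0 = br (u + v) (u + v)"
    using alt by simp
  also have "\<dots> = br u v + br v u"
    by (simp only: cbilinear3D[OF bil]) (simp add: alt)
  finally show ?thesis
    by (metis eq_neg_iff_add_eq_0)
qed

lemma is_TP_on_mu0_TP: "is_TP_on_mu0 (TP a b)"
  unfolding is_TP_on_mu0_def is_lie_def cbilinear3_def clinear3_def
  by (simp add: vec3_eq_iff algebra_simps)

lemma is_TP_on_mu0_eq_TP:
  assumes "is_TP_on_mu0 br"
  shows "br = TP (br (ebas 1) (ebas 2) $ 2) (br (ebas 1) (ebas 2) $ 3)"
proof -
  have lie: "is_lie br"
    and tp: "\<And>x y z. 2 *s mu0 z (br x y) = br (mu0 z x) y + br x (mu0 z y)"
    using assms unfolding is_TP_on_mu0_def by auto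
  have bil: "cbilinear3 br" and alt: "\<And>x. br x x = 0"
    using lie unfolding is_lie_def by auto
  note anticomm = is_lie_anticomm[OF lie]
  define P where "P = br (ebas 1) (ebas 2)"
  define Q where "Q = br (ebas 1) (ebas 3)"
  define R where "R = br (ebas 2) (ebas 3)"
  have "2 *s mu0 (ebas 1) P = Q"
    using tp[of "ebas 1" "ebas 1" "ebas 2"] by (simp add: mu0_ebas alt P_def Q_def)
  moreover have "2 *s mu0 (ebas 1) Q = R"
    using tp[of "ebas 1" "ebas 1" "ebas 3"] by (simp add: mu0_ebas cbilinear3D[OF bil] Q_def R_def)
  moreover have "2 *s mu0 (ebas 2) P = - R"
    using tp[of "ebas 2" "ebas 1" "ebas 2"]
    by (simp add: mu0_ebas cbilinear3D[OF bil] P_def R_def anticomm[of "ebas 3" "ebas 2"])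
  ultimately have coords: "P$1 = 0" "Q = vector [0, 0, 2 * P$2]" "R = 0"
    by (auto simp: vec3_eq_iff)
  show ?thesis
  proof (intro ext)
    fix x y
    show "br x y = TP (br (ebas 1) (ebas 2) $ 2) (br (ebas 1) (ebas 2) $ 3) x y"
      using coords unfolding cbilinear3_expand[OF bil, of x y] P_def Q_def R_def
      by (simp add: vec3_eq_iff alt anticomm[of "ebas 2" "ebas 1"] anticomm[of "ebas 3" "ebas 1"]
          anticomm[of "ebas 3" "ebas 2"] algebra_simps)
  qed
qed

lemma TP_iso_refl: "TP_iso br br"
  unfolding TP_iso_def clinear3_def by (rule exI[of _ id]) auto

lemma TP_iso_TP_1_0:
  assumes "a \<noteq> 0"
  shows "TP_iso (TP a b) (TP 1 0)"
proof -
  define f :: "V3 \<Rightarrow> V3"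
    where "f x = vector [a * x$1, a * b / 2 * x$1 + a^2 * x$2, a^2 * b * x$2 + a^3 * x$3]" for x
  define g :: "V3 \<Rightarrow> V3"
    where "g y = vector [y$1 / a, (y$2 - b / 2 * y$1) / a^2,
                         (y$3 - b * (y$2 - b / 2 * y$1)) / a^3]" for y
  have f_nth [simp]: "f x $ 1 = a * x$1" "f x $ 2 = a * b / 2 * x$1 + a^2 * x$2"
      "f x $ 3 = a^2 * b * x$2 + a^3 * x$3" for x
    by (simp_all add: f_def)
  have g_nth [simp]: "g y $ 1 = y$1 / a" "g y $ 2 = (y$2 - b / 2 * y$1) / a^2"
      "g y $ 3 = (y$3 - b * (y$2 - b / 2 * y$1)) / a^3" for y
    by (simp_all add: g_def)
  have "bij f"
  proof (rule o_bij[of g])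
    show "g \<circ> f = id" "f \<circ> g = id"
      using assms by (auto simp: vec3_eq_iff field_simps power2_eq_square power3_eq_cube)
  qed
  moreover have "clinear3 f"
    unfolding clinear3_def by (simp add: vec3_eq_iff algebra_simps)
  moreover have "\<forall>x y. f (mu0 x y) = mu0 (f x) (f y)"
    by (simp add: vec3_eq_iff algebra_simps power2_eq_square power3_eq_cube)
  moreover have "\<forall>x y. f (TP a b x y) = TP 1 0 (f x) (f y)"
    by (simp add: vec3_eq_iff algebra_simps power2_eq_square power3_eq_cube)
  ultimately show ?thesis
    unfolding TP_iso_def by blast
qed

lemma mu0_hom_ebas:
  assumes "\<forall>x y. f (mu0 x y) = mu0 (f x) (f y)"
  shows "f (ebas 2) = mu0 (f (ebas 1)) (f (ebas 1))"
    "f (ebas 3) = mu0 (f (ebas 1)) (mu0 (f (ebas 1)) (f (ebas 1)))"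
  using assms by (metis mu0_ebas(1,2))+

lemma mu0_auto_ebas1_nth1_nonzero:
  assumes "clinear3 f" "bij f" "\<forall>x y. f (mu0 x y) = mu0 (f x) (f y)"
  shows "f (ebas 1) $ 1 \<noteq> 0"
proof
  assume "f (ebas 1) $ 1 = 0"
  then have "f (ebas 3) = f 0"
    using mu0_hom_ebas(2)[OF assms(3)] clinear3D(3)[OF assms(1)] by (simp add: vec3_eq_iff)
  then have "ebas 3 = 0"
    using assms(2) by (simp add: bij_def inj_eq)
  then show False
    by (simp add: vec3_eq_iff)
qed

lemma TP_iso_TP_invariants:
  assumes "TP_iso (TP a b) (TP a' b')"
  shows "a = 0 \<longleftrightarrow> a' = 0" and "a = 0 \<Longrightarrow> b = b'"
proof -
  obtain f where lin: "clinear3 f" and "bij f" and hom: "\<forall>x y. f (mu0 x y) = mu0 (f x) (f y)"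
    and br: "\<forall>x y. f (TP a b x y) = TP a' b' (f x) (f y)"
    using assms unfolding TP_iso_def by blast
  define c where "c = f (ebas 1) $ 1"
  define d where "d = f (ebas 1) $ 2"
  have "c \<noteq> 0"
    unfolding c_def using mu0_auto_ebas1_nth1_nonzero[OF lin \<open>bij f\<close> hom] .
  have "TP a b (ebas 1) (ebas 2) = a *s ebas 2 + b *s ebas 3"
    by (simp add: vec3_eq_iff)
  then have "a *s f (ebas 2) + b *s f (ebas 3) = TP a' b' (f (ebas 1)) (f (ebas 2))"
    using br clinear3D[OF lin] by metis
  then have "a * c^2 = a' * c^3" "2 * a * c * d + b * c^3 = b' * c^3 + 4 * a' * c^2 * d"
    unfolding mu0_hom_ebas[OF hom] c_def d_def
    by (simp_all add: vec3_eq_iff power2_eq_square power3_eq_cube algebra_simps)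
  then have a_eq: "a = a' * c" and b_eq: "a = 0 \<Longrightarrow> b = b'"
    using \<open>c \<noteq> 0\<close> by (simp_all add: power2_eq_square power3_eq_cube)
  show "a = 0 \<longleftrightarrow> a' = 0"
    using a_eq \<open>c \<noteq> 0\<close> by simp
  show "a = 0 \<Longrightarrow> b = b'"
    by (rule b_eq)
qed

theorem mainTheorem3:
  shows "(\<forall>br. is_TP_on_mu0 br \<longrightarrow>
            TP_iso br (TP 1 0) \<or> (\<exists>\<alpha>. TP_iso br (TP 0 \<alpha>)))
       \<and> is_TP_on_mu0 (TP 1 0) \<and> (\<forall>\<alpha>. is_TP_on_mu0 (TP 0 \<alpha>))
       \<and> (\<forall>\<alpha>. \<not> TP_iso (TP 1 0) (TP 0 \<alpha>))
       \<and> (\<forall>\<alpha> \<beta>. TP_iso (TP 0 \<alpha>) (TP 0 \<beta>) \<longrightarrow> \<alpha> = \<beta>)"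
proof (intro conjI allI impI)
  fix br
  assume "is_TP_on_mu0 br"
  then obtain a b where "br = TP a b"
    using is_TP_on_mu0_eq_TP by blast
  then show "TP_iso br (TP 1 0) \<or> (\<exists>\<alpha>. TP_iso br (TP 0 \<alpha>))"
    using TP_iso_refl TP_iso_TP_1_0 by (cases "a = 0") auto
next
  fix \<alpha>
  show "\<not> TP_iso (TP 1 0) (TP 0 \<alpha>)"
    using TP_iso_TP_invariants(1) by fastforce
next
  fix \<alpha> \<beta>
  assume "TP_iso (TP 0 \<alpha>) (TP 0 \<beta>)"
  then show "\<alpha> = \<beta>"
    using TP_iso_TP_invariants(2) by blast
qed (rule is_TP_on_mu0_TP)+

end
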